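(* Let $M,N\ge 1$, $\gamma>0$, $\lambda_x,\lambda_v,\lambda_w>0$, and let $\{(\hat x_i,\hat v_i)\}_{i=1}^N$ solve the centralized herding system \[ \frac{d\hat x_i}{dt}=\hat v_i,\qquad \frac{d\hat v_i}{dt}=\frac{\lambda_x}{N}\sum_{j=1}^N\hat\phi_{ij}(\hat x_j-\hat x_i)+\frac{\lambda_v}{N}\sum_{j=1}^N\hat\phi_{ij}(\hat v_j-\hat v_i)-\lambda_w\hat x_i,\qquad \hat\phi_{ij}=(1+|\hat x_i-\hat x_j|^2)^{-\gamma/2}, \] with $\sum_i\hat x_i(0)=\sum_i\hat v_i(0)=0$. Assume $\frac12(\lambda_v/\lambda_x)^2\lambda_w>1$, \[ \max_{i,j}|\hat x_i(0)-\hat x_j(0)|<\frac12\sqrt{\Big(\frac12\Big(\frac{\lambda_v}{\lambda_x}\Big)^2\lambda_w\Big)^{2/\gamma}-1},\qquad \mathcal{E}_1(0)<\frac32\Big(1-\frac{M_0}{2}\Big)\lambda_w\max_{i,j}|\hat x_i(0)-\hat x_j(0)|^2, \] where $M_0=(1+4\max_{i,j}|\hat x_i(0)-\hat x_j(0)|^2)^{-\gamma/2}$. Let $\alpha=\frac{2\lambda_x^2}{(\lambda_x+\lambda_w)\lambda_v}$. Then there is $\delta\in(0,1)$ such that, with $\kappa=\delta\min\{\frac12,-1+\frac12(\lambda_v/\lambda_x)^2\lambda_wM_0\}\alpha$, for all $t\ge0$ and $1\le i,j\le N$, \[ |\hat x_i(t)-\hat x_j(t)|^2\le C_1e^{-\kappa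 t}\mathcal{E}_1(0),\qquad |\hat v_i(t)-\hat v_j(t)|^2\le C_2e^{-\kappa t}\mathcal{E}_1(0), \] where $C_1=\frac{4}{(2-M_0)\lambda_w}$ and $C_2=\frac{4M_0\lambda_w}{2M_0\lambda_w-\alpha^2}$.
   Context: $|\cdot|$ is the Euclidean norm on $\mathbb{R}^M$. The centralized variables are deviations $\hat x_i=x_i-x_c$, $\hat v_i=v_i-v_c$ from the averages for a solution of the original herding model, so their sums vanish for all time. $X(t)=\sum_i|\hat x_i|^2$, $V(t)=\sum_i|\hat v_i|^2$, $C(X,V)(t)=\sum_i\hat x_i\cdot\hat v_i$, and $\mathcal{E}_1=\lambda_wX+\alpha C(X,V)+V$ with $\alpha=\frac{2\lambda_x^2}{(\lambda_x+\lambda_w)\lambda_v}$. *)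

theory Defs
  imports "HOL-Analysis.Analysis"
begin

text \<open>Particles are indexed by i < N; positions/velocities live in real^'m (= R^M, M = CARD('m)).\<close>

definition herd_phi :: "real \<Rightarrow> real^'m \<Rightarrow> real^'m \<Rightarrow> real" where
  "herd_phi \<gamma> y z = (1 + (norm (y - z))\<^sup>2) powr (- \<gamma> / 2)"

definition herd_solution ::
  "nat \<Rightarrow> real \<Rightarrow> real \<Rightarrow> real \<Rightarrow> real \<Rightarrow>
   (nat \<Rightarrow> real \<Rightarrow> real^'m) \<Rightarrow> (nat \<Rightarrow> real \<Rightarrow> real^'m) \<Rightarrow> bool" where
  "herd_solution N \<gamma> lx lv lw x v \<longleftrightarrow>
     (\<forall>i<N. \<forall>t\<ge>0.
        (x i has_vector_derivative v i t) (at t within {0..}) \<and>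
        (v i has_vector_derivative
            ((lx / real N) *\<^sub>R (\<Sum>j<N. herd_phi \<gamma> (x i t) (x j t) *\<^sub>R (x j t - x i t))
           + (lv / real N) *\<^sub>R (\<Sum>j<N. herd_phi \<gamma> (x i t) (x j t) *\<^sub>R (v j t - v i t))
           - lw *\<^sub>R x i t)) (at t within {0..}))"

definition Xf :: "nat \<Rightarrow> (nat \<Rightarrow> real \<Rightarrow> real^'m) \<Rightarrow> real \<Rightarrow> real" where
  "Xf N x t = (\<Sum>i<N. (norm (x i t))\<^sup>2)"

definition Vf :: "nat \<Rightarrow> (nat \<Rightarrow> real \<Rightarrow> real^'m) \<Rightarrow> real \<Rightarrow> real" where
  "Vf N v t = (\<Sum>i<N. (norm (v i t))\<^sup>2)"

definition CXV :: "nat \<Rightarrow> (nat \<Rightarrow> real \<Rightarrow> real^'m) \<Rightarrow> (nat \<Rightarrow> real \<Rightarrow> real^'m) \<Rightarrow> real \<Rightarrow> real" where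
  "CXV N x v t = (\<Sum>i<N. x i t \<bullet> v i t)"

definition herd_alpha :: "real \<Rightarrow> real \<Rightarrow> real \<Rightarrow> real" where
  "herd_alpha lx lv lw = 2 * lx\<^sup>2 / ((lx + lw) * lv)"

definition energy1 :: "nat \<Rightarrow> real \<Rightarrow> real \<Rightarrow> real \<Rightarrow>
   (nat \<Rightarrow> real \<Rightarrow> real^'m) \<Rightarrow> (nat \<Rightarrow> real \<Rightarrow> real^'m) \<Rightarrow> real \<Rightarrow> real" where
  "energy1 N lx lv lw x v t =
     lw * Xf N x t + herd_alpha lx lv lw * CXV N x v t + Vf N v t"

definition diam0 :: "nat \<Rightarrow> (nat \<Rightarrow> real \<Rightarrow> real^'m) \<Rightarrow> real" where
  "diam0 N x = Max {norm (x i 0 - x j 0) | i j. i < N \<and> j < N}"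

end

theory Submission
  imports Defs
begin

text \<open>The energy \<open>\<E>\<^sub>1 = lw X + \<alpha> C + V\<close> is comparable to \<open>X + V\<close>, since the cross term is
  controlled by Cauchy-Schwarz. Along solutions the centres of mass stay at the origin, and
  \<open>d\<E>\<^sub>1/dt\<close> is an average over pairs \<open>(i, j)\<close> of quadratic forms in
  \<open>(x\<^sub>i - x\<^sub>j, v\<^sub>i - v\<^sub>j)\<close> whose coefficients depend on the weight \<open>\<phi>\<^sub>i\<^sub>j\<close>.
  When \<open>M\<^sub>0 \<le> \<phi>\<^sub>i\<^sub>j \<le> 1\<close> each of these forms is negative definite with a uniform margin,
  so \<open>d\<E>\<^sub>1/dt \<le> -c \<E>\<^sub>1\<close>. A bootstrap closes the argument: as long as \<open>\<E>\<^sub>1\<close> stays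
  below the threshold given by the initial data, \<open>X\<close> is so small that all pairwise distances are
  at most twice the initial diameter, hence \<open>\<phi>\<^sub>i\<^sub>j \<ge> M\<^sub>0\<close> and \<open>\<E>\<^sub>1\<close> decays, so the
  threshold is never reached. The spread bounds follow from
  \<open>|x\<^sub>i - x\<^sub>j|\<^sup>2 \<le> 2X\<close> and \<open>|v\<^sub>i - v\<^sub>j|\<^sup>2 \<le> 2V\<close>.\<close>

lemma quadratic_form_nonneg:
  fixes u w k a b c :: real
  assumes "u \<ge> 0" "w \<ge> 0" "k\<^sup>2 \<le> 4*u*w" "a \<ge> 0" "b \<ge> 0" "\<bar>c\<bar> \<le> a*b"
  shows "u*a\<^sup>2 + w*b\<^sup>2 + k*c \<ge> 0"
proof -
  have "\<bar>k*c\<bar> \<le> \<bar>k\<bar>*(a*b)"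
    using assms(6) by (simp add: abs_mult mult_left_mono)
  then have kc: "k*c \<ge> -(\<bar>k\<bar>*(a*b))" by linarith
  have "u*a\<^sup>2 + w*b\<^sup>2 - \<bar>k\<bar>*(a*b) \<ge> 0"
  proof (cases "u = 0")
    case True
    then have "k = 0" using assms(3) by simp
    then show ?thesis using True assms by simp
  next
    case False
    then have u: "u > 0" using assms(1) by simp
    have "u*(u*a\<^sup>2 + w*b\<^sup>2 - \<bar>k\<bar>*(a*b)) = (u*a - \<bar>k\<bar>*b/2)\<^sup>2 + (u*w - k\<^sup>2/4)*b\<^sup>2"
      by (simp add: power2_eq_square algebra_simps)
    also have "\<dots> \<ge> 0" using assms(3) by (intro add_nonneg_nonneg) auto
    finally show ?thesis using u by (simp add: zero_le_mult_iff)
  qed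
  then show ?thesis using kc by linarith
qed

lemma inner_quadratic_form_nonneg:
  fixes y z :: "'a::real_inner" and u w k :: real
  assumes "u \<ge> 0" "w \<ge> 0" "k\<^sup>2 \<le> 4*u*w"
  shows "u*(norm y)\<^sup>2 + w*(norm z)\<^sup>2 + k*(y \<bullet> z) \<ge> 0"
  using quadratic_form_nonneg[OF assms norm_ge_zero norm_ge_zero Cauchy_Schwarz_ineq2] .

lemma sum_inner_quadratic_form_nonneg:
  fixes ys zs :: "nat \<Rightarrow> 'a::real_inner" and u w k :: real
  assumes "u \<ge> 0" "w \<ge> 0" "k\<^sup>2 \<le> 4*u*w"
  shows "u*(\<Sum>i<N. (norm (ys i))\<^sup>2) + w*(\<Sum>i<N. (norm (zs i))\<^sup>2) + k*(\<Sum>i<N. ys i \<bullet> zs i) \<ge> 0"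
proof -
  have "0 \<le> (\<Sum>i<N. u*(norm (ys i))\<^sup>2 + w*(norm (zs i))\<^sup>2 + k*(ys i \<bullet> zs i))"
    using assms by (intro sum_nonneg inner_quadratic_form_nonneg)
  then show ?thesis by (simp add: sum.distrib sum_distrib_left)
qed

lemma energy1_ge_Xf:
  assumes "lw \<ge> 0" "M0 \<ge> 0" "(herd_alpha lx lv lw)\<^sup>2 \<le> 2*M0*lw"
  shows "(1 - M0/2)*lw*Xf N x t \<le> energy1 N lx lv lw x v t"
  using sum_inner_quadratic_form_nonneg[where u="M0*lw/2" and w=1 and k="herd_alpha lx lv lw"
      and N=N and ys="\<lambda>i. x i t" and zs="\<lambda>i. v i t"] assms
  unfolding energy1_def Xf_def Vf_def CXV_def by (simp add: algebra_simps)

lemma energy1_nonneg: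
  assumes "lw \<ge> 0" "M0 \<ge> 0" "M0 \<le> 2" "(herd_alpha lx lv lw)\<^sup>2 \<le> 2*M0*lw"
  shows "0 \<le> energy1 N lx lv lw x v t"
proof -
  have "0 \<le> (1 - M0/2)*lw*Xf N x t"
    using assms unfolding Xf_def by (intro mult_nonneg_nonneg sum_nonneg) auto
  also have "\<dots> \<le> energy1 N lx lv lw x v t"
    using energy1_ge_Xf assms by blast
  finally show ?thesis .
qed

lemma energy1_ge_Vf:
  assumes "lw > 0" "M0 > 0" "M0 \<le> 1" "(herd_alpha lx lv lw)\<^sup>2 < 2*M0*lw"
  shows "(1 - (herd_alpha lx lv lw)\<^sup>2/(2*M0*lw))*Vf N v t \<le> energy1 N lx lv lw x v t"
proof -
  define w where "w = (herd_alpha lx lv lw)\<^sup>2/(2*M0*lw)"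
  have "(herd_alpha lx lv lw)\<^sup>2 * M0 \<le> (herd_alpha lx lv lw)\<^sup>2 * 2"
    using assms by (intro mult_left_mono) auto
  then have "(herd_alpha lx lv lw)\<^sup>2 \<le> 2*(herd_alpha lx lv lw)\<^sup>2/M0"
    using assms by (simp add: le_divide_eq mult.commute)
  also have "\<dots> = 4*lw*w"
    using assms unfolding w_def by (simp add: field_simps)
  finally have "(herd_alpha lx lv lw)\<^sup>2 \<le> 4*lw*w" .
  moreover have "w \<ge> 0"
    using assms unfolding w_def by simp
  ultimately show ?thesis
    using sum_inner_quadratic_form_nonneg[where u=lw and w=w and k="herd_alpha lx lv lw"
        and N=N and ys="\<lambda>i. x i t" and zs="\<lambda>i. v i t"] assms
    unfolding energy1_def Xf_def Vf_def CXV_def w_def[symmetric] by (simp add: algebra_simps)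
qed

lemma energy1_le_Xf_Vf:
  assumes "lw \<ge> 0" "herd_alpha lx lv lw \<ge> 0"
  shows "energy1 N lx lv lw x v t \<le> (lw + herd_alpha lx lv lw/2 + 1)*(Xf N x t + Vf N v t)"
proof -
  have "0 \<le> lw * Vf N v t + Xf N x t"
    using assms unfolding Xf_def Vf_def by (intro add_nonneg_nonneg mult_nonneg_nonneg sum_nonneg) auto
  then show ?thesis
    using sum_inner_quadratic_form_nonneg[where u="herd_alpha lx lv lw/2" and w="herd_alpha lx lv lw/2"
        and k="- herd_alpha lx lv lw" and N=N and ys="\<lambda>i. x i t" and zs="\<lambda>i. v i t"] assms
    unfolding energy1_def Xf_def Vf_def CXV_def by (simp add: algebra_simps power2_eq_square)
qed

lemma norm_diff_power2_le_sum:
  fixes f :: "nat \<Rightarrow> 'a::real_normed_vector"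
  assumes "i < N" "j < N"
  shows "(norm (f i - f j))\<^sup>2 \<le> 2*(\<Sum>k<N. (norm (f k))\<^sup>2)"
proof (cases "i = j")
  case True
  then show ?thesis by (auto intro: sum_nonneg)
next
  case False
  have "(norm (f i - f j))\<^sup>2 \<le> (norm (f i) + norm (f j))\<^sup>2"
    by (intro power_mono norm_triangle_ineq4) auto
  also have "\<dots> \<le> 2*((norm (f i))\<^sup>2 + (norm (f j))\<^sup>2)"
    by (smt (verit) power2_sum sum_squares_bound)
  also have "(norm (f i))\<^sup>2 + (norm (f j))\<^sup>2 = (\<Sum>k\<in>{i,j}. (norm (f k))\<^sup>2)"
    using False by simp
  also have "\<dots> \<le> (\<Sum>k<N. (norm (f k))\<^sup>2)"
    using assms by (intro sum_mono2) auto
  finally show ?thesis by simp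
qed

lemma position_spread_le_energy1:
  assumes "i < N" "j < N" "lw > 0" "M0 < 2" "M0 \<ge> 0" "(herd_alpha lx lv lw)\<^sup>2 \<le> 2*M0*lw"
  shows "(norm (x i t - x j t))\<^sup>2 \<le> 4 / ((2 - M0) * lw) * energy1 N lx lv lw x v t"
proof -
  have "(norm (x i t - x j t))\<^sup>2 \<le> 2 * Xf N x t"
    unfolding Xf_def using norm_diff_power2_le_sum[where f="\<lambda>k. x k t", OF assms(1,2)] .
  also have "\<dots> = 4 / ((2 - M0) * lw) * ((1 - M0/2)*lw*Xf N x t)"
    using assms by (simp add: field_simps)
  also have "\<dots> \<le> 4 / ((2 - M0) * lw) * energy1 N lx lv lw x v t"
    using energy1_ge_Xf[of lw M0] assms by (intro mult_left_mono) auto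
  finally show ?thesis .
qed

lemma velocity_spread_le_energy1:
  assumes "i < N" "j < N" "lw > 0" "M0 > 0" "M0 \<le> 1" "(herd_alpha lx lv lw)\<^sup>2 < 2*M0*lw"
  shows "(norm (v i t - v j t))\<^sup>2
           \<le> 4 * M0 * lw / (2 * M0 * lw - (herd_alpha lx lv lw)\<^sup>2) * energy1 N lx lv lw x v t"
proof -
  have "(norm (v i t - v j t))\<^sup>2 \<le> 2 * Vf N v t"
    unfolding Vf_def using norm_diff_power2_le_sum[where f="\<lambda>k. v k t", OF assms(1,2)] .
  also have "\<dots> = 4 * M0 * lw / (2 * M0 * lw - (herd_alpha lx lv lw)\<^sup>2)
                  * ((1 - (herd_alpha lx lv lw)\<^sup>2/(2*M0*lw))*Vf N v t)"
    using assms by (simp add: field_simps)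
  also have "\<dots> \<le> 4 * M0 * lw / (2 * M0 * lw - (herd_alpha lx lv lw)\<^sup>2) * energy1 N lx lv lw x v t"
    using energy1_ge_Vf[of lw M0] assms by (intro mult_left_mono) auto
  finally show ?thesis .
qed

definition pair_dissipation :: "real \<Rightarrow> real \<Rightarrow> real \<Rightarrow> real \<Rightarrow> real \<Rightarrow> 'a::real_inner \<Rightarrow> 'a \<Rightarrow> real" where
  "pair_dissipation lx lv lw al p y z =
     - (al*lx*p/2 + al*lw/2) * (y \<bullet> y) - (al*lv/2 + lx) * p * (y \<bullet> z) - (lv*p - al/2) * (z \<bullet> z)"

text \<open>For \<open>M\<^sub>0 \<le> p \<le> 1\<close>, \<open>dissipation_det\<close> bounds the determinant (times 4) of the pairwise
  form from below and the denominator of \<open>dissipation_margin\<close> bounds its trace from above; this makes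
  the form stay semidefinite after the margin is subtracted from both diagonal coefficients.\<close>

definition dissipation_det :: "real \<Rightarrow> real \<Rightarrow> real \<Rightarrow> real \<Rightarrow> real" where
  "dissipation_det lx lv lw M0 =
     lx\<^sup>2 * (lv\<^sup>2*M0*(4*lw*(lx+lw) - lw\<^sup>2) - 4*lx^3 - 4*lx\<^sup>2*lw) / ((lx+lw)\<^sup>2*lv\<^sup>2)"

definition dissipation_margin :: "real \<Rightarrow> real \<Rightarrow> real \<Rightarrow> real \<Rightarrow> real" where
  "dissipation_margin lx lv lw M0 =
     dissipation_det lx lv lw M0 / (4 * (herd_alpha lx lv lw * (lx + lw)/2 + lv))"

lemma herd_alpha_pos: "lx > 0 \<Longrightarrow> lv > 0 \<Longrightarrow> lw > 0 \<Longrightarrow> herd_alpha lx lv lw > 0"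
  unfolding herd_alpha_def by simp

lemma herd_alpha_le: "lx > 0 \<Longrightarrow> lv > 0 \<Longrightarrow> lw > 0 \<Longrightarrow> herd_alpha lx lv lw \<le> 2*lx/lv"
proof -
  assume pos: "lx > 0" "lv > 0" "lw > 0"
  have "herd_alpha lx lv lw = (2*lx/lv) * (lx/(lx+lw))"
    unfolding herd_alpha_def by (simp add: power2_eq_square mult.commute mult.assoc)
  also have "\<dots> \<le> (2*lx/lv) * 1"
    using pos by (intro mult_left_mono) auto
  finally show ?thesis by simp
qed

lemma herd_alpha_sq_less:
  assumes "lx > 0" "lv > 0" "lw > 0" "2*lx\<^sup>2 < lv\<^sup>2*M0*lw"
  shows "(herd_alpha lx lv lw)\<^sup>2 < 2*M0*lw"
proof -
  have "(herd_alpha lx lv lw)\<^sup>2 \<le> (2*lx/lv)\<^sup>2"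
    using assms herd_alpha_pos herd_alpha_le by (intro power_mono) (auto intro: less_imp_le)
  also have "\<dots> < 2*M0*lw"
    using assms by (simp add: power_divide field_simps)
  finally show ?thesis .
qed

lemma dissipation_det_pos:
  assumes "lx > 0" "lv > 0" "lw > 0" "2*lx\<^sup>2 < lv\<^sup>2*M0*lw"
  shows "dissipation_det lx lv lw M0 > 0"
proof -
  have "lv\<^sup>2*M0*(4*lw*(lx+lw) - lw\<^sup>2) = (lv\<^sup>2*M0*lw)*(4*lx + 3*lw)"
    by (simp add: algebra_simps power2_eq_square)
  also have "\<dots> > 2*lx\<^sup>2*(4*lx + 3*lw)"
    using assms by (intro mult_strict_right_mono) auto
  moreover have "lx*lx*lx > 0" "lw*lx*lx > 0"
    using assms by auto
  ultimately have "lv\<^sup>2*M0*(4*lw*(lx+lw) - lw\<^sup>2) > 4*lx^3 + 4*lx\<^sup>2*lw"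
    by (simp add: power2_eq_square power3_eq_cube algebra_simps)
  then show ?thesis
    unfolding dissipation_det_def using assms by simp
qed

lemma dissipation_margin_pos:
  assumes "lx > 0" "lv > 0" "lw > 0" "2*lx\<^sup>2 < lv\<^sup>2*M0*lw"
  shows "dissipation_margin lx lv lw M0 > 0"
  unfolding dissipation_margin_def
  using dissipation_det_pos[OF assms] herd_alpha_pos[OF assms(1-3)] assms
  by (simp add: add_pos_pos)

lemma pair_form_det_ge:
  fixes lx lv lw M0 p :: real
  assumes lx: "lx > 0" and lv: "lv > 0" and lw: "lw > 0" and M0: "M0 > 0" and p: "M0 \<le> p" "p \<le> 1"
  defines "al \<equiv> herd_alpha lx lv lw"
  shows "((al*lv/2 + lx)*p)\<^sup>2 + dissipation_det lx lv lw M0 \<le> 4*((al*lx*p/2 + al*lw/2)*(lv*p - al/2))"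
proof -
  define lxw where "lxw = lx + lw"
  have lxw: "lxw > 0" using lx lw lxw_def by simp
  have al: "al = 2*lx\<^sup>2/(lxw*lv)" unfolding al_def herd_alpha_def lxw_def by simp
  define h where "h = lv\<^sup>2*p*(4*lw*lxw - lw\<^sup>2*p) - 4*lx\<^sup>2*(lx*p + lw)"
  define h1 where "h1 = lv\<^sup>2*M0*(4*lw*lxw - lw\<^sup>2) - 4*lx^3 - 4*lx\<^sup>2*lw"
  have identity: "4*((al*lx*p/2 + al*lw/2)*(lv*p - al/2)) - ((al*lv/2 + lx)*p)\<^sup>2 = lx\<^sup>2*h/(lxw\<^sup>2*lv\<^sup>2)"
    unfolding h_def al using lxw lv
    apply (simp add: field_simps power2_eq_square)
    apply (simp add: lxw_def algebra_simps)
    done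
  have "lw\<^sup>2*p \<le> lw\<^sup>2" using p by (simp add: mult_left_le)
  moreover have "lw\<^sup>2 < 4*lw*lxw"
    using lw lx lxw_def
    by (simp add: power2_eq_square algebra_simps, intro add_pos_pos mult_pos_pos, auto)
  ultimately have "lv\<^sup>2*M0*(4*lw*lxw - lw\<^sup>2*p) \<le> lv\<^sup>2*p*(4*lw*lxw - lw\<^sup>2*p)"
    using p by (intro mult_right_mono mult_left_mono) auto
  moreover have "lv\<^sup>2*M0*lw\<^sup>2*p + 4*lx^3*p \<le> lv\<^sup>2*M0*lw\<^sup>2 + 4*lx^3"
    using p M0 lx by (intro add_mono mult_left_le) auto
  ultimately have "h1 \<le> h"
    unfolding h_def h1_def by (simp add: algebra_simps power3_eq_cube power2_eq_square)
  then have "lx\<^sup>2*h1/(lxw\<^sup>2*lv\<^sup>2) \<le> lx\<^sup>2*h/(lxw\<^sup>2*lv\<^sup>2)"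
    by (intro divide_right_mono mult_left_mono) auto
  moreover have "dissipation_det lx lv lw M0 = lx\<^sup>2*h1/(lxw\<^sup>2*lv\<^sup>2)"
    unfolding dissipation_det_def h1_def lxw_def ..
  ultimately show ?thesis using identity by linarith
qed

lemma shifted_discriminant_le:
  fixes A C K d lam :: real
  assumes "A > 0" "C > 0" "K\<^sup>2 + 4*d \<le> 4*(A*C)" "lam \<ge> 0" "lam*(A + C) \<le> d"
  shows "lam \<le> A" "lam \<le> C" "K\<^sup>2 \<le> 4*(A - lam)*(C - lam)"
proof -
  have AC: "lam*(A + C) \<le> A*C"
    using assms zero_le_power2[of K] by linarith
  have split: "lam*(A + C) = lam*A + lam*C"
    by (simp add: distrib_left)
  have "lam*C \<le> A*C"
    using AC split mult_nonneg_nonneg[of lam A] assms by linarith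
  then show "lam \<le> A"
    using assms(2) by (rule mult_right_le_imp_le)
  have "lam*A \<le> A*C"
    using AC split mult_nonneg_nonneg[of lam C] assms by linarith
  then have "lam*A \<le> C*A"
    by (simp only: mult.commute)
  then show "lam \<le> C"
    using assms(1) by (rule mult_right_le_imp_le)
  have "K\<^sup>2 \<le> 4*(A*C) - 4*(lam*(A + C))"
    using assms by linarith
  also have "\<dots> = 4*(A*C - lam*(A + C))"
    by (simp only: right_diff_distrib)
  also have "\<dots> \<le> 4*(A*C - lam*(A + C)) + 4*lam\<^sup>2"
    by simp
  also have "\<dots> = 4*(A - lam)*(C - lam)"
    by (simp add: algebra_simps power2_eq_square)
  finally show "K\<^sup>2 \<le> 4*(A - lam)*(C - lam)" .
qed

lemma pair_dissipation_le:
  fixes y z :: "'a::real_inner"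
  assumes lx: "lx > 0" and lv: "lv > 0" and lw: "lw > 0" and M0: "M0 > 0"
    and coupling: "2*lx\<^sup>2 < lv\<^sup>2*M0*lw" and p: "M0 \<le> p" "p \<le> 1"
  shows "pair_dissipation lx lv lw (herd_alpha lx lv lw) p y z
           \<le> - dissipation_margin lx lv lw M0 * ((norm y)\<^sup>2 + (norm z)\<^sup>2)"
proof -
  define al where "al = herd_alpha lx lv lw"
  define A where "A = al*lx*p/2 + al*lw/2"
  define C where "C = lv*p - al/2"
  define K where "K = (al*lv/2 + lx)*p"
  define T where "T = al*(lx + lw)/2 + lv"
  define lam where "lam = dissipation_margin lx lv lw M0"
  have al_pos: "al > 0" unfolding al_def using lx lv lw by (rule herd_alpha_pos)
  have A: "A > 0" unfolding A_def using al_pos lx lw p M0 by (simp add: add_pos_pos)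
  have "al/2 \<le> lx\<^sup>2/(lw*lv)"
    unfolding al_def herd_alpha_def using lx lv lw by (simp add: frac_le)
  also have "\<dots> < lv*M0"
  proof -
    have "lx\<^sup>2 < lv\<^sup>2*M0*lw"
      using coupling zero_le_power2[of lx] by linarith
    then show ?thesis
      using lv lw by (simp add: field_simps power2_eq_square)
  qed
  also have "\<dots> \<le> lv*p"
    using p lv by simp
  finally have C: "C > 0" unfolding C_def by simp
  have det: "K\<^sup>2 + 4*(dissipation_det lx lv lw M0/4) \<le> 4*(A*C)"
    using pair_form_det_ge[OF lx lv lw M0 p] unfolding A_def C_def K_def al_def by simp
  have "al*lx*p \<le> al*lx" "lv*p \<le> lv"
    using mult_left_le[OF p(2), of "al*lx"] mult_left_le[OF p(2), of lv] al_pos lx lv by auto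
  then have "A + C \<le> al*lx/2 + al*lw/2 + lv"
    unfolding A_def C_def using al_pos by linarith
  also have "\<dots> = al*(lx + lw)/2 + lv"
    by (simp add: algebra_simps)
  finally have trace: "A + C \<le> T"
    unfolding T_def .
  have T: "T > 0"
    unfolding T_def using al_pos lx lw lv by (simp add: add_pos_pos)
  have lam: "lam = (dissipation_det lx lv lw M0/4) / T"
    unfolding lam_def dissipation_margin_def al_def T_def by simp
  have lam_pos: "lam \<ge> 0"
    unfolding lam_def using dissipation_margin_pos[OF lx lv lw coupling] by simp
  have "lam*(A + C) \<le> lam*T"
    using trace lam_pos by (rule mult_left_mono)
  also have "\<dots> = dissipation_det lx lv lw M0/4"
    unfolding lam using T by simp
  finally have "lam*(A + C) \<le> dissipation_det lx lv lw M0/4" .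
  note shifted = shifted_discriminant_le[OF A C det lam_pos this]
  have "0 \<le> (A - lam)*(norm y)\<^sup>2 + (C - lam)*(norm z)\<^sup>2 + K*(y \<bullet> z)"
    using shifted by (intro inner_quadratic_form_nonneg) auto
  then show ?thesis
    unfolding pair_dissipation_def al_def[symmetric] lam_def[symmetric]
    by (simp add: A_def C_def K_def power2_norm_eq_inner algebra_simps)
qed

lemma has_real_derivative_inner:
  fixes f g :: "real \<Rightarrow> 'a::real_inner"
  assumes "(f has_vector_derivative f') (at t within S)" "(g has_vector_derivative g') (at t within S)"
  shows "((\<lambda>t. f t \<bullet> g t) has_real_derivative (f' \<bullet> g t + f t \<bullet> g')) (at t within S)"
proof -
  have "((\<lambda>t. f t \<bullet> g t) has_derivative (\<lambda>h. f t \<bullet> (h *\<^sub>R g') + (h *\<^sub>R f') \<bullet> g t)) (at t within S)"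
    using assms unfolding has_vector_derivative_def by (intro has_derivative_inner) auto
  then show ?thesis
    unfolding has_field_derivative_def by (rule has_derivative_eq_rhs) (auto simp: algebra_simps)
qed

lemma sum_symmetric_weighted_diff_eq_0:
  fixes ph :: "nat \<Rightarrow> nat \<Rightarrow> real" and y :: "nat \<Rightarrow> 'a::real_vector"
  assumes "\<And>i j. ph i j = ph j i"
  shows "(\<Sum>i<N. \<Sum>j<N. ph i j *\<^sub>R (y j - y i)) = 0"
proof -
  have "(\<Sum>i<N. \<Sum>j<N. ph i j *\<^sub>R y j) = (\<Sum>j<N. \<Sum>i<N. ph i j *\<^sub>R y j)"
    by (rule sum.swap)
  also have "\<dots> = (\<Sum>i<N. \<Sum>j<N. ph i j *\<^sub>R y i)"
    using assms by (intro sum.cong refl) metis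
  finally show ?thesis by (simp add: scaleR_diff_right sum_subtractf)
qed

lemma inner_sum_symmetric_weighted_diff:
  fixes ph :: "nat \<Rightarrow> nat \<Rightarrow> real" and y z :: "nat \<Rightarrow> 'a::real_inner"
  assumes sym: "\<And>i j. ph i j = ph j i"
  shows "(\<Sum>i<N. z i \<bullet> (\<Sum>j<N. ph i j *\<^sub>R (y j - y i))) =
         -(1/2) * (\<Sum>i<N. \<Sum>j<N. ph i j * ((z i - z j) \<bullet> (y i - y j)))"
proof -
  define T where "T = (\<Sum>i<N. \<Sum>j<N. ph i j * (z i \<bullet> (y j - y i)))"
  have "T = (\<Sum>j<N. \<Sum>i<N. ph i j * (z i \<bullet> (y j - y i)))"
    unfolding T_def by (rule sum.swap)
  also have "\<dots> = (\<Sum>i<N. \<Sum>j<N. ph i j * (z j \<bullet> (y i - y j)))"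
    using sym by (intro sum.cong refl) metis
  finally have "T + T = (\<Sum>i<N. \<Sum>j<N. ph i j * (z i \<bullet> (y j - y i)) + ph i j * (z j \<bullet> (y i - y j)))"
    unfolding T_def by (simp add: sum.distrib)
  also have "\<dots> = - (\<Sum>i<N. \<Sum>j<N. ph i j * ((z i - z j) \<bullet> (y i - y j)))"
    by (simp add: inner_diff_left inner_diff_right algebra_simps flip: sum_negf)
  finally show ?thesis
    unfolding T_def by (simp add: inner_sum_right)
qed

lemma sum_sum_inner_diff:
  fixes y z :: "nat \<Rightarrow> 'a::real_inner"
  shows "(\<Sum>i<N. \<Sum>j<N. (z i - z j) \<bullet> (y i - y j)) =
          2 * real N * (\<Sum>i<N. z i \<bullet> y i) - 2 * ((\<Sum>i<N. z i) \<bullet> (\<Sum>i<N. y i))"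
proof -
  have "(\<Sum>i<N. \<Sum>j<N. (z i - z j) \<bullet> (y i - y j)) =
      (\<Sum>i<N. \<Sum>j<N. z i \<bullet> y i) + (\<Sum>i<N. \<Sum>j<N. z j \<bullet> y j)
      - (\<Sum>i<N. \<Sum>j<N. z i \<bullet> y j) - (\<Sum>i<N. \<Sum>j<N. z j \<bullet> y i)"
    by (simp add: inner_diff_left inner_diff_right sum.distrib sum_subtractf algebra_simps)
  also have "(\<Sum>i<N. \<Sum>j<N. z i \<bullet> y j) = (\<Sum>i<N. z i) \<bullet> (\<Sum>i<N. y i)"
    by (simp add: inner_sum_left inner_sum_right, rule sum.swap)
  also have "(\<Sum>i<N. \<Sum>j<N. z j \<bullet> y i) = (\<Sum>i<N. z i) \<bullet> (\<Sum>i<N. y i)"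
    by (simp add: inner_sum_left inner_sum_right)
  also have "(\<Sum>i<N. \<Sum>j<N. z j \<bullet> y j) = real N * (\<Sum>i<N. z i \<bullet> y i)"
    by simp
  also have "(\<Sum>i<N. \<Sum>j<N. z i \<bullet> y i) = real N * (\<Sum>i<N. z i \<bullet> y i)"
    by (simp add: sum_distrib_left mult.commute)
  finally show ?thesis by simp
qed

lemma nonincreasing_below_barrier:
  fixes H G :: "real \<Rightarrow> real" and B :: real
  assumes deriv: "\<And>t. t \<ge> 0 \<Longrightarrow> (H has_real_derivative G t) (at t within {0..})"
    and nonpos: "\<And>t. t \<ge> 0 \<Longrightarrow> H t \<le> B \<Longrightarrow> G t \<le> 0"
    and below: "H 0 < B" and t1: "t1 \<ge> 0"
  shows "H t1 \<le> H 0"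
proof (rule ccontr)
  assume "\<not> H t1 \<le> H 0"
  define m where "m = min (H t1) B"
  have m: "H 0 < m"
    unfolding m_def using \<open>\<not> H t1 \<le> H 0\<close> below by simp
  have cont: "continuous_on {0..} H"
    unfolding continuous_on_eq_continuous_within using deriv by (auto intro: DERIV_continuous)
  define Z where "Z = {0..t1} \<inter> H -` {m..}"
  have "closed Z"
    unfolding Z_def using cont by (intro continuous_closed_preimage) (auto elim: continuous_on_subset)
  moreover have "t1 \<in> Z"
    unfolding Z_def m_def using t1 by auto
  moreover have Z_bdd: "bdd_below Z"
    unfolding Z_def by (rule bdd_belowI[of _ 0]) auto
  ultimately have "Inf Z \<in> Z"
    using closed_contains_Inf by blast
  then have t2: "0 \<le> Inf Z" "H (Inf Z) \<ge> m"
    unfolding Z_def by auto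
  \<comment> \<open>\<open>Inf Z\<close> is the first time \<open>H\<close> reaches \<open>m \<le> B\<close>; before it, \<open>G \<le> 0\<close>.\<close>
  have "H (Inf Z) \<le> H 0"
  proof (rule DERIV_nonpos_imp_decreasing_open[OF t2(1)])
    fix s assume s: "0 < s" "s < Inf Z"
    have "s \<notin> Z"
      using s cInf_lower[OF _ Z_bdd] by fastforce
    then have "H s < m"
      unfolding Z_def using s t2 \<open>Inf Z \<in> Z\<close> by (auto simp: Z_def)
    then have "G s \<le> 0"
      using nonpos[of s] s unfolding m_def by auto
    moreover have "(H has_real_derivative G s) (at s)"
      using deriv[of s] s at_within_open[of s "{0<..}"]
      by (metis DERIV_subset greaterThan_iff less_imp_le open_greaterThan atLeast_iff subsetI)
    ultimately show "\<exists>y. DERIV H s :> y \<and> y \<le> 0" by blast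
  next
    show "continuous_on {0..Inf Z} H"
      using cont by (rule continuous_on_subset) auto
  qed
  then show False using t2(2) m by simp
qed

lemma herd_energy_derivative_pairwise:
  fixes xs vs :: "nat \<Rightarrow> 'a::real_inner" and ph :: "nat \<Rightarrow> nat \<Rightarrow> real" and lx lv lw al :: real
  assumes sym: "\<And>i j. ph i j = ph j i" and sx: "(\<Sum>i<N. xs i) = 0" and sv: "(\<Sum>i<N. vs i) = 0"
    and N: "N > 0"
  defines "a \<equiv> \<lambda>i. (lx/real N) *\<^sub>R (\<Sum>j<N. ph i j *\<^sub>R (xs j - xs i))
        + (lv/real N) *\<^sub>R (\<Sum>j<N. ph i j *\<^sub>R (vs j - vs i)) - lw *\<^sub>R xs i"
  shows "2*lw*(\<Sum>i<N. xs i \<bullet> vs i) + al*((\<Sum>i<N. vs i \<bullet> vs i) + (\<Sum>i<N. xs i \<bullet> a i))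
          + 2*(\<Sum>i<N. vs i \<bullet> a i)
   = (1/real N) * (\<Sum>i<N. \<Sum>j<N. pair_dissipation lx lv lw al (ph i j) (xs i - xs j) (vs i - vs j))"
proof -
  define Pxx where "Pxx = (\<Sum>i<N. \<Sum>j<N. ph i j * ((xs i - xs j) \<bullet> (xs i - xs j)))"
  define Pxv where "Pxv = (\<Sum>i<N. \<Sum>j<N. ph i j * ((xs i - xs j) \<bullet> (vs i - vs j)))"
  define Pvv where "Pvv = (\<Sum>i<N. \<Sum>j<N. ph i j * ((vs i - vs j) \<bullet> (vs i - vs j)))"
  define X where "X = (\<Sum>i<N. xs i \<bullet> xs i)"
  define V where "V = (\<Sum>i<N. vs i \<bullet> vs i)"
  define C where "C = (\<Sum>i<N. xs i \<bullet> vs i)"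
  have Pvx: "(\<Sum>i<N. \<Sum>j<N. ph i j * ((vs i - vs j) \<bullet> (xs i - xs j))) = Pxv"
    unfolding Pxv_def by (simp add: inner_commute)
  have "(\<Sum>i<N. xs i \<bullet> a i) = (lx/real N) * (\<Sum>i<N. xs i \<bullet> (\<Sum>j<N. ph i j *\<^sub>R (xs j - xs i)))
     + (lv/real N) * (\<Sum>i<N. xs i \<bullet> (\<Sum>j<N. ph i j *\<^sub>R (vs j - vs i))) - lw * X"
    unfolding a_def X_def
    by (simp add: inner_add_right inner_diff_right sum.distrib sum_subtractf sum_distrib_left)
  then have xa: "(\<Sum>i<N. xs i \<bullet> a i) = (lx/real N) * (-(1/2)*Pxx) + (lv/real N) * (-(1/2)*Pxv) - lw * X"
    unfolding Pxx_def Pxv_def inner_sum_symmetric_weighted_diff[OF sym] .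
  have "(\<Sum>i<N. vs i \<bullet> a i) = (lx/real N) * (\<Sum>i<N. vs i \<bullet> (\<Sum>j<N. ph i j *\<^sub>R (xs j - xs i)))
     + (lv/real N) * (\<Sum>i<N. vs i \<bullet> (\<Sum>j<N. ph i j *\<^sub>R (vs j - vs i))) - lw * C"
    unfolding a_def C_def
    by (simp add: inner_add_right inner_diff_right sum.distrib sum_subtractf sum_distrib_left inner_commute)
  then have va: "(\<Sum>i<N. vs i \<bullet> a i) = (lx/real N) * (-(1/2)*Pxv) + (lv/real N) * (-(1/2)*Pvv) - lw * C"
    unfolding Pvv_def Pvx[symmetric] inner_sum_symmetric_weighted_diff[OF sym] .
  have Qxx: "(\<Sum>i<N. \<Sum>j<N. (xs i - xs j) \<bullet> (xs i - xs j)) = 2 * real N * X"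
    using sum_sum_inner_diff[where N=N and z=xs and y=xs] sx unfolding X_def by simp
  have Qvv: "(\<Sum>i<N. \<Sum>j<N. (vs i - vs j) \<bullet> (vs i - vs j)) = 2 * real N * V"
    using sum_sum_inner_diff[where N=N and z=vs and y=vs] sv unfolding V_def by simp
  have collect: "(\<Sum>i<N. \<Sum>j<N.
        - (al*lx*ph i j/2 + al*lw/2) * e i j - (al*lv/2 + lx) * ph i j * f i j - (lv * ph i j - al/2) * g i j)
     = - (al*lx/2) * (\<Sum>i<N. \<Sum>j<N. ph i j * e i j) - (al*lw/2) * (\<Sum>i<N. \<Sum>j<N. e i j)
       - (al*lv/2 + lx) * (\<Sum>i<N. \<Sum>j<N. ph i j * f i j) - lv * (\<Sum>i<N. \<Sum>j<N. ph i j * g i j)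
       + (al/2) * (\<Sum>i<N. \<Sum>j<N. g i j)" for e f g :: "nat \<Rightarrow> nat \<Rightarrow> real"
    by (simp add: sum.distrib sum_subtractf sum_distrib_left algebra_simps sum_negf sum_divide_distrib)
  have pairs: "(\<Sum>i<N. \<Sum>j<N. pair_dissipation lx lv lw al (ph i j) (xs i - xs j) (vs i - vs j))
     = - (al*lx/2) * Pxx - (al*lw/2) * (\<Sum>i<N. \<Sum>j<N. (xs i - xs j) \<bullet> (xs i - xs j))
       - (al*lv/2 + lx) * Pxv - lv * Pvv + (al/2) * (\<Sum>i<N. \<Sum>j<N. (vs i - vs j) \<bullet> (vs i - vs j))"
    unfolding pair_dissipation_def Pxx_def Pxv_def Pvv_def
    by (rule collect[where e="\<lambda>i j. (xs i - xs j) \<bullet> (xs i - xs j)" and f="\<lambda>i j. (xs i - xs j) \<bullet> (vs i - vs j)"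
         and g="\<lambda>i j. (vs i - vs j) \<bullet> (vs i - vs j)"])
  show ?thesis
    unfolding pairs Qxx Qvv xa va C_def[symmetric] V_def[symmetric] using N by (simp add: field_simps)
qed

definition energy_decay_rate :: "real \<Rightarrow> real \<Rightarrow> real \<Rightarrow> real \<Rightarrow> real" where
  "energy_decay_rate lx lv lw M0 =
     2 * dissipation_margin lx lv lw M0 / (lw + herd_alpha lx lv lw / 2 + 1)"

lemma energy_decay_rate_pos:
  assumes "lx > 0" "lv > 0" "lw > 0" "2*lx\<^sup>2 < lv\<^sup>2*M0*lw"
  shows "energy_decay_rate lx lv lw M0 > 0"
  unfolding energy_decay_rate_def
  using dissipation_margin_pos[OF assms] herd_alpha_pos[OF assms(1-3)] assms by (simp add: add_pos_pos)

lemma herd_phi_sym: "herd_phi \<gamma> y z = herd_phi \<gamma> z y"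
  unfolding herd_phi_def by (simp add: norm_minus_commute)

lemma one_plus_power2_powr_pos: "0 < (1 + s\<^sup>2) powr a" for s a :: real
  using add_pos_nonneg[of 1 "s\<^sup>2"] by simp

lemma one_plus_power2_powr_le_1: "a \<le> 0 \<Longrightarrow> (1 + s\<^sup>2) powr a \<le> 1" for s a :: real
  using powr_mono2'[of a 1 "1 + s\<^sup>2"] by simp

lemma herd_phi_le_1: "\<gamma> \<ge> 0 \<Longrightarrow> herd_phi \<gamma> y z \<le> 1"
  unfolding herd_phi_def by (rule one_plus_power2_powr_le_1) simp

lemma herd_phi_ge:
  assumes "\<gamma> \<ge> 0" "(norm (y - z))\<^sup>2 \<le> r\<^sup>2"
  shows "(1 + r\<^sup>2) powr (- \<gamma> / 2) \<le> herd_phi \<gamma> y z"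
  unfolding herd_phi_def using assms by (intro powr_mono2') (auto intro: add_pos_nonneg)

locale herding_system =
  fixes N :: nat and \<gamma> lx lv lw :: real and x v :: "nat \<Rightarrow> real \<Rightarrow> real^'m"
  assumes N_pos: "N \<ge> 1" and gamma_pos: "\<gamma> > 0"
    and lx_pos: "lx > 0" and lv_pos: "lv > 0" and lw_pos: "lw > 0"
    and solution: "herd_solution N \<gamma> lx lv lw x v"
    and x_centered_0: "(\<Sum>i<N. x i 0) = 0" and v_centered_0: "(\<Sum>i<N. v i 0) = 0"
begin

definition accel :: "nat \<Rightarrow> real \<Rightarrow> real^'m" where
  "accel i t =
     (lx / real N) *\<^sub>R (\<Sum>j<N. herd_phi \<gamma> (x i t) (x j t) *\<^sub>R (x j t - x i t))
   + (lv / real N) *\<^sub>R (\<Sum>j<N. herd_phi \<gamma> (x i t) (x j t) *\<^sub>R (v j t - v i t))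
   - lw *\<^sub>R x i t"

definition energy_rate :: "real \<Rightarrow> real" where
  "energy_rate t = (1 / real N) * (\<Sum>i<N. \<Sum>j<N.
     pair_dissipation lx lv lw (herd_alpha lx lv lw) (herd_phi \<gamma> (x i t) (x j t))
       (x i t - x j t) (v i t - v j t))"

lemma x_has_derivative: "i < N \<Longrightarrow> t \<ge> 0 \<Longrightarrow> (x i has_vector_derivative v i t) (at t within {0..})"
  using solution unfolding herd_solution_def by blast

lemma v_has_derivative: "i < N \<Longrightarrow> t \<ge> 0 \<Longrightarrow> (v i has_vector_derivative accel i t) (at t within {0..})"
  using solution unfolding herd_solution_def accel_def by blast

lemma sum_accel: "(\<Sum>i<N. accel i t) = - lw *\<^sub>R (\<Sum>i<N. x i t)"
proof -
  have "(\<Sum>i<N. accel i t) =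
     (lx / real N) *\<^sub>R (\<Sum>i<N. \<Sum>j<N. herd_phi \<gamma> (x i t) (x j t) *\<^sub>R (x j t - x i t))
   + (lv / real N) *\<^sub>R (\<Sum>i<N. \<Sum>j<N. herd_phi \<gamma> (x i t) (x j t) *\<^sub>R (v j t - v i t))
   - lw *\<^sub>R (\<Sum>i<N. x i t)"
    unfolding accel_def by (simp add: sum.distrib sum_subtractf scaleR_sum_right)
  also have "\<dots> = - lw *\<^sub>R (\<Sum>i<N. x i t)"
    using sum_symmetric_weighted_diff_eq_0[where ph="\<lambda>i j. herd_phi \<gamma> (x i t) (x j t)" and y="\<lambda>j. x j t"]
      sum_symmetric_weighted_diff_eq_0[where ph="\<lambda>i j. herd_phi \<gamma> (x i t) (x j t)" and y="\<lambda>j. v j t"]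
    by (simp add: herd_phi_sym)
  finally show ?thesis .
qed

text \<open>The centres of mass obey \<open>S' = W\<close>, \<open>W' = - lw S\<close>, which conserves \<open>lw |S|\<^sup>2 + |W|\<^sup>2\<close>.\<close>

lemma centered:
  assumes "t \<ge> 0"
  shows "(\<Sum>i<N. x i t) = 0 \<and> (\<Sum>i<N. v i t) = 0"
proof -
  define S where "S = (\<lambda>t. \<Sum>i<N. x i t)"
  define W where "W = (\<lambda>t. \<Sum>i<N. v i t)"
  have dS: "(S has_vector_derivative W t) (at t within {0..})" if "t \<ge> 0" for t
    unfolding S_def W_def using x_has_derivative that by (intro has_vector_derivative_sum) auto
  have dW: "(W has_vector_derivative (- lw *\<^sub>R S t)) (at t within {0..})" if "t \<ge> 0" for t
    unfolding W_def S_def sum_accel[symmetric] using v_has_derivative that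
    by (intro has_vector_derivative_sum) auto
  define F where "F = (\<lambda>t. lw * (S t \<bullet> S t) + W t \<bullet> W t)"
  have "(F has_real_derivative 0) (at t within {0..})" if "t \<in> {0..}" for t
  proof -
    have "(F has_real_derivative (lw * (W t \<bullet> S t + S t \<bullet> W t) + ((- lw *\<^sub>R S t) \<bullet> W t + W t \<bullet> (- lw *\<^sub>R S t))))
        (at t within {0..})"
      unfolding F_def using that by (intro DERIV_add DERIV_cmult has_real_derivative_inner dS dW) auto
    then show ?thesis by (rule DERIV_cong) (simp add: inner_commute algebra_simps)
  qed
  then obtain c where "\<forall>t\<in>{0..}. F t = c"
    using has_field_derivative_zero_constant[of "{0::real..}" F] by auto
  moreover have "F 0 = 0"
    unfolding F_def S_def W_def using x_centered_0 v_centered_0 by simp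
  ultimately have "lw * (S t \<bullet> S t) + W t \<bullet> W t = 0"
    using assms unfolding F_def by auto
  moreover have "S t \<bullet> S t \<ge> 0" "W t \<bullet> W t \<ge> 0"
    by auto
  ultimately have "S t \<bullet> S t = 0" "W t \<bullet> W t = 0"
    using lw_pos by (smt (verit) mult_pos_pos mult_nonneg_nonneg)+
  then show ?thesis unfolding S_def W_def by simp
qed

lemma energy1_has_derivative:
  assumes "t \<ge> 0"
  shows "(energy1 N lx lv lw x v has_real_derivative energy_rate t) (at t within {0..})"
proof -
  define al where "al = herd_alpha lx lv lw"
  have E: "energy1 N lx lv lw x v =
      (\<lambda>t. lw*(\<Sum>i<N. x i t \<bullet> x i t) + al*(\<Sum>i<N. x i t \<bullet> v i t) + (\<Sum>i<N. v i t \<bullet> v i t))"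
    unfolding energy1_def Xf_def Vf_def CXV_def al_def by (simp add: power2_norm_eq_inner)
  have "(energy1 N lx lv lw x v has_real_derivative
          lw*(\<Sum>i<N. v i t \<bullet> x i t + x i t \<bullet> v i t) + al*(\<Sum>i<N. v i t \<bullet> v i t + x i t \<bullet> accel i t)
          + (\<Sum>i<N. accel i t \<bullet> v i t + v i t \<bullet> accel i t)) (at t within {0..})"
    unfolding E using assms
    by (intro DERIV_add DERIV_cmult DERIV_sum has_real_derivative_inner x_has_derivative v_has_derivative) auto
  moreover have "lw*(\<Sum>i<N. v i t \<bullet> x i t + x i t \<bullet> v i t) + al*(\<Sum>i<N. v i t \<bullet> v i t + x i t \<bullet> accel i t)
          + (\<Sum>i<N. accel i t \<bullet> v i t + v i t \<bullet> accel i t)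
        = 2*lw*(\<Sum>i<N. x i t \<bullet> v i t) + al*((\<Sum>i<N. v i t \<bullet> v i t) + (\<Sum>i<N. x i t \<bullet> accel i t))
          + 2*(\<Sum>i<N. v i t \<bullet> accel i t)"
    by (simp add: sum.distrib inner_commute flip: sum_distrib_left)
  moreover have "\<dots> = energy_rate t"
    using herd_energy_derivative_pairwise[where ph="\<lambda>i j. herd_phi \<gamma> (x i t) (x j t)" and xs="\<lambda>i. x i t"
        and vs="\<lambda>i. v i t" and lx=lx and lv=lv and lw=lw and al=al and N=N, OF herd_phi_sym]
      centered[OF assms] N_pos
    unfolding energy_rate_def accel_def al_def by simp
  ultimately show ?thesis by simp
qed

lemma energy_rate_le:
  assumes t: "t \<ge> 0" and M0: "M0 > 0" and coupling: "2*lx\<^sup>2 < lv\<^sup>2*M0*lw"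
    and close: "\<And>i j. i < N \<Longrightarrow> j < N \<Longrightarrow> M0 \<le> herd_phi \<gamma> (x i t) (x j t)"
  shows "energy_rate t \<le> - energy_decay_rate lx lv lw M0 * energy1 N lx lv lw x v t"
proof -
  define lam where "lam = dissipation_margin lx lv lw M0"
  define al where "al = herd_alpha lx lv lw"
  have al: "al \<ge> 0"
    unfolding al_def using herd_alpha_pos[OF lx_pos lv_pos lw_pos] by simp
  have "lam > 0"
    unfolding lam_def using dissipation_margin_pos[OF lx_pos lv_pos lw_pos coupling] .
  have "(\<Sum>i<N. \<Sum>j<N. pair_dissipation lx lv lw al (herd_phi \<gamma> (x i t) (x j t))
                          (x i t - x j t) (v i t - v j t))
     \<le> (\<Sum>i<N. \<Sum>j<N. - lam * ((x i t - x j t) \<bullet> (x i t - x j t) + (v i t - v j t) \<bullet> (v i t - v j t)))"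
    unfolding al_def lam_def
    using pair_dissipation_le[OF lx_pos lv_pos lw_pos M0 coupling close herd_phi_le_1] gamma_pos
    by (intro sum_mono) (simp add: power2_norm_eq_inner)
  also have "\<dots> = - lam * ((\<Sum>i<N. \<Sum>j<N. (x i t - x j t) \<bullet> (x i t - x j t))
                           + (\<Sum>i<N. \<Sum>j<N. (v i t - v j t) \<bullet> (v i t - v j t)))"
    by (simp add: sum_distrib_left sum.distrib sum_negf distrib_left sum_subtractf)
  also have "\<dots> = - 2 * real N * lam * (Xf N x t + Vf N v t)"
    using sum_sum_inner_diff[where N=N and z="\<lambda>i. x i t" and y="\<lambda>i. x i t"]
      sum_sum_inner_diff[where N=N and z="\<lambda>i. v i t" and y="\<lambda>i. v i t"] centered[OF t]
    unfolding Xf_def Vf_def by (simp add: power2_norm_eq_inner algebra_simps)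
  finally have "energy_rate t \<le> (1 / real N) * (- 2 * real N * lam * (Xf N x t + Vf N v t))"
    unfolding energy_rate_def al_def using N_pos by (intro mult_left_mono) auto
  also have "\<dots> = - 2 * lam * (Xf N x t + Vf N v t)"
    using N_pos by simp
  also have "\<dots> \<le> - energy_decay_rate lx lv lw M0 * energy1 N lx lv lw x v t"
  proof -
    define Mx where "Mx = lw + al/2 + 1"
    have Mx: "Mx > 0"
      unfolding Mx_def using al lw_pos by simp
    have "energy_decay_rate lx lv lw M0 * energy1 N lx lv lw x v t
            \<le> energy_decay_rate lx lv lw M0 * (Mx * (Xf N x t + Vf N v t))"
      using energy1_le_Xf_Vf[where lw=lw and lx=lx and lv=lv and N=N and x=x and v=v and t=t, folded al_def]
        energy_decay_rate_pos[OF lx_pos lv_pos lw_pos coupling] al lw_pos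
      unfolding Mx_def by (intro mult_left_mono) auto
    also have "\<dots> = 2 * lam * (Xf N x t + Vf N v t)"
      unfolding energy_decay_rate_def lam_def[symmetric] al_def[symmetric] Mx_def[symmetric] using Mx by simp
    finally show ?thesis by simp
  qed
  finally show ?thesis .
qed

lemma energy1_small_imp_close:
  assumes "M0 = (1 + r\<^sup>2) powr (- \<gamma> / 2)" "(herd_alpha lx lv lw)\<^sup>2 \<le> 2*M0*lw"
    and small: "energy1 N lx lv lw x v t \<le> (1 - M0/2) * lw * r\<^sup>2 / 2"
    and ij: "i < N" "j < N"
  shows "M0 \<le> herd_phi \<gamma> (x i t) (x j t)"
proof -
  have M0: "0 < M0" "M0 \<le> 1"
    using assms(1) gamma_pos one_plus_power2_powr_pos one_plus_power2_powr_le_1 by auto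
  have "(1 - M0/2) * lw * Xf N x t \<le> energy1 N lx lv lw x v t"
    using energy1_ge_Xf[of lw M0 lx lv N x t v] assms(2) M0 lw_pos by simp
  also have "\<dots> \<le> (1 - M0/2) * lw * (r\<^sup>2/2)"
    using small by simp
  finally have "(1 - M0/2) * lw * Xf N x t \<le> (1 - M0/2) * lw * (r\<^sup>2/2)" .
  moreover have "(1 - M0/2) * lw > 0"
    using M0 lw_pos by simp
  ultimately have "Xf N x t \<le> r\<^sup>2/2"
    by (simp only: mult_le_cancel_left_pos)
  moreover have "(norm (x i t - x j t))\<^sup>2 \<le> 2 * Xf N x t"
    unfolding Xf_def using norm_diff_power2_le_sum[where f="\<lambda>k. x k t", OF ij] .
  ultimately show ?thesis
    unfolding assms(1) using gamma_pos by (intro herd_phi_ge) auto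
qed

lemma energy1_exponential_decay:
  assumes "r \<ge> 0" and coupling: "2*lx\<^sup>2 < lv\<^sup>2*M0*lw"
    and M0_def: "M0 = (1 + r\<^sup>2) powr (- \<gamma> / 2)"
    and small: "energy1 N lx lv lw x v 0 < (1 - M0/2) * lw * r\<^sup>2 / 2"
    and t: "t \<ge> 0"
  shows "energy1 N lx lv lw x v t \<le> energy1 N lx lv lw x v 0 * exp (- energy_decay_rate lx lv lw M0 * t)"
proof -
  define E where "E = energy1 N lx lv lw x v"
  define c where "c = energy_decay_rate lx lv lw M0"
  have M0: "0 < M0" "M0 \<le> 1"
    using M0_def gamma_pos one_plus_power2_powr_pos one_plus_power2_powr_le_1 by auto
  have al2: "(herd_alpha lx lv lw)\<^sup>2 \<le> 2*M0*lw"
    using herd_alpha_sq_less[OF lx_pos lv_pos lw_pos coupling] by simp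
  have E_nonneg: "E s \<ge> 0" for s
    unfolding E_def using M0 lw_pos al2 by (intro energy1_nonneg[of lw M0]) auto
  have c: "c > 0"
    unfolding c_def using energy_decay_rate_pos[OF lx_pos lv_pos lw_pos coupling] .
  define H where "H = (\<lambda>s. E s * exp (c * s))"
  define G where "G = (\<lambda>s. energy_rate s * exp (c * s) + (exp (c * s) * c) * E s)"
  have "(H has_real_derivative G s) (at s within {0..})" if "s \<ge> 0" for s
    unfolding H_def G_def E_def
    by (intro DERIV_mult energy1_has_derivative that) (auto intro!: derivative_eq_intros)
  moreover have "G s \<le> 0" if s: "s \<ge> 0" and "H s \<le> (1 - M0/2) * lw * r\<^sup>2 / 2" for s
  proof -
    have "E s * 1 \<le> H s"
      unfolding H_def using E_nonneg c s by (intro mult_left_mono) auto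
    then have "E s \<le> (1 - M0/2) * lw * r\<^sup>2 / 2"
      using that by simp
    then have "energy_rate s \<le> - c * E s"
      unfolding c_def E_def
      using energy_rate_le[OF s M0(1) coupling] energy1_small_imp_close[OF M0_def al2] by blast
    then have "(energy_rate s + c * E s) * exp (c * s) \<le> 0"
      by (intro mult_nonpos_nonneg) auto
    then show ?thesis
      unfolding G_def by (simp add: algebra_simps)
  qed
  ultimately have "H t \<le> H 0"
    using nonincreasing_below_barrier[of H G "(1 - M0/2) * lw * r\<^sup>2 / 2" t] small t
    unfolding H_def E_def by auto
  then have "H t * exp (- c * t) \<le> E 0 * exp (- c * t)"
    unfolding H_def by simp
  then show ?thesis
    unfolding H_def E_def c_def by (simp add: mult.assoc flip: exp_add)
qed

lemma spreads_exponential_decay: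
  assumes "r \<ge> 0" and coupling: "2*lx\<^sup>2 < lv\<^sup>2*M0*lw"
    and M0_def: "M0 = (1 + r\<^sup>2) powr (- \<gamma> / 2)"
    and small: "energy1 N lx lv lw x v 0 < (1 - M0/2) * lw * r\<^sup>2 / 2"
    and t: "t \<ge> 0" and ij: "i < N" "j < N" and rate: "\<kappa> \<le> energy_decay_rate lx lv lw M0"
  shows "(norm (x i t - x j t))\<^sup>2 \<le> 4 / ((2 - M0) * lw) * exp (- \<kappa> * t) * energy1 N lx lv lw x v 0"
    and "(norm (v i t - v j t))\<^sup>2 \<le> 4 * M0 * lw / (2 * M0 * lw - (herd_alpha lx lv lw)\<^sup>2)
                                      * exp (- \<kappa> * t) * energy1 N lx lv lw x v 0"
proof -
  define E where "E = energy1 N lx lv lw x v"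
  have M0: "0 < M0" "M0 \<le> 1"
    using M0_def gamma_pos one_plus_power2_powr_pos one_plus_power2_powr_le_1 by auto
  have al2: "(herd_alpha lx lv lw)\<^sup>2 < 2*M0*lw"
    using herd_alpha_sq_less[OF lx_pos lv_pos lw_pos coupling] .
  have "E 0 \<ge> 0"
    unfolding E_def using M0 lw_pos al2 by (intro energy1_nonneg[of lw M0]) auto
  moreover have "exp (- energy_decay_rate lx lv lw M0 * t) \<le> exp (- \<kappa> * t)"
    using rate t by (simp add: mult_right_mono)
  ultimately have "E t \<le> exp (- \<kappa> * t) * E 0"
    using energy1_exponential_decay[OF assms(1-5)] unfolding E_def
    by (metis mult.commute mult_left_mono order_trans)
  moreover have "4 / ((2 - M0) * lw) \<ge> 0" "4 * M0 * lw / (2 * M0 * lw - (herd_alpha lx lv lw)\<^sup>2) \<ge> 0"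
    using M0 lw_pos al2 by simp_all
  ultimately show "(norm (x i t - x j t))\<^sup>2 \<le> 4 / ((2 - M0) * lw) * exp (- \<kappa> * t) * E 0"
    and "(norm (v i t - v j t))\<^sup>2 \<le> 4 * M0 * lw / (2 * M0 * lw - (herd_alpha lx lv lw)\<^sup>2)
                                      * exp (- \<kappa> * t) * E 0"
    using position_spread_le_energy1[OF ij lw_pos, of M0 lx lv x t v]
      velocity_spread_le_energy1[OF ij lw_pos M0 al2, of v t x] M0 al2 unfolding E_def
    by (smt (verit, best) mult.assoc mult_left_mono)+
qed

end

lemma diam0_nonneg:
  assumes "N \<ge> 1"
  shows "0 \<le> diam0 N x"
proof -
  have "finite {norm (x i 0 - x j 0) | i j. i < N \<and> j < N}"
    using finite_image_set2[of "\<lambda>i. i < N" "\<lambda>j. j < N" "\<lambda>i j. norm (x i 0 - x j 0)"] by simp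
  moreover have "norm (x 0 0 - x 0 0) \<in> {norm (x i 0 - x j 0) | i j. i < N \<and> j < N}"
    using assms by (intro CollectI exI[of _ 0]) auto
  ultimately show ?thesis
    unfolding diam0_def by (metis (no_types, lifting) Max_ge norm_ge_zero order_trans)
qed

lemma diam_bound_imp_coupling:
  fixes A0 D \<gamma> :: real
  assumes "\<gamma> > 0" "D \<ge> 0" "A0 > 0" "D < 1/2 * sqrt (A0 powr (2/\<gamma>) - 1)"
  shows "1 < A0 * (1 + 4*D\<^sup>2) powr (- \<gamma>/2)"
proof -
  define y where "y = A0 powr (2/\<gamma>) - 1"
  have "2*D < sqrt y"
    using assms(4) unfolding y_def by linarith
  moreover from this have "y > 0"
    using assms(2) real_sqrt_gt_0_iff[of y] by linarith
  ultimately have "(2*D)\<^sup>2 < (sqrt y)\<^sup>2"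
    using assms(2) by (intro power_strict_mono) auto
  also have "\<dots> = y"
    using \<open>y > 0\<close> by simp
  finally have P: "1 + 4*D\<^sup>2 < A0 powr (2/\<gamma>)"
    unfolding y_def by (simp add: power_mult_distrib)
  have P_pos: "0 < (1 + 4*D\<^sup>2) powr (\<gamma>/2)"
    using one_plus_power2_powr_pos[of "2*D" "\<gamma>/2"] by (simp add: power_mult_distrib)
  have "(1 + 4*D\<^sup>2) powr (\<gamma>/2) < (A0 powr (2/\<gamma>)) powr (\<gamma>/2)"
    using assms(1) P by (intro powr_less_mono2) auto
  also have "\<dots> = A0"
    using assms(1,3) by (simp add: powr_powr)
  finally have "1 < A0 * inverse ((1 + 4*D\<^sup>2) powr (\<gamma>/2))"
    using P_pos by (simp add: field_simps)
  then show ?thesis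
    by (simp add: powr_minus)
qed

lemma exists_factor_below:
  fixes k c :: real
  assumes "k > 0" "c > 0"
  shows "\<exists>\<delta>. 0 < \<delta> \<and> \<delta> < 1 \<and> \<delta> * k \<le> c"
proof (intro exI conjI)
  show "0 < min (1/2) (c/k)" "min (1/2) (c/k) < 1"
    using assms by auto
  show "min (1/2) (c/k) * k \<le> c"
    using assms by (simp add: min_def field_simps)
qed

theorem corollary3p5:
  fixes N :: nat and \<gamma> lx lv lw :: real
    and x v :: "nat \<Rightarrow> real \<Rightarrow> real^'m"
  assumes "N \<ge> 1" and "\<gamma> > 0" and "lx > 0" and "lv > 0" and "lw > 0"
    and sol: "herd_solution N \<gamma> lx lv lw x v"
    and x0: "(\<Sum>i<N. x i 0) = 0" and v0: "(\<Sum>i<N. v i 0) = 0"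
    and cond: "1/2 * (lv / lx)\<^sup>2 * lw > 1"
    and diam: "diam0 N x < 1/2 * sqrt ((1/2 * (lv / lx)\<^sup>2 * lw) powr (2 / \<gamma>) - 1)"
    and en: "energy1 N lx lv lw x v 0 <
               3/2 * (1 - (1 + 4 * (diam0 N x)\<^sup>2) powr (- \<gamma> / 2) / 2) * lw * (diam0 N x)\<^sup>2"
  shows "\<exists>\<delta>. 0 < \<delta> \<and> \<delta> < 1 \<and>
    (let M0 = (1 + 4 * (diam0 N x)\<^sup>2) powr (- \<gamma> / 2);
         \<alpha> = herd_alpha lx lv lw;
         \<kappa> = \<delta> * min (1/2) (-1 + 1/2 * (lv / lx)\<^sup>2 * lw * M0) * \<alpha>;
         C1 = 4 / ((2 - M0) * lw);
         C2 = 4 * M0 * lw / (2 * M0 * lw - \<alpha>\<^sup>2);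
         E0 = energy1 N lx lv lw x v 0
     in \<forall>t\<ge>0. \<forall>i<N. \<forall>j<N.
          (norm (x i t - x j t))\<^sup>2 \<le> C1 * exp (- \<kappa> * t) * E0 \<and>
          (norm (v i t - v j t))\<^sup>2 \<le> C2 * exp (- \<kappa> * t) * E0)"
proof -
  interpret herding_system N \<gamma> lx lv lw x v
    using assms by unfold_locales
  define D where "D = diam0 N x"
  define M0 where "M0 = (1 + (2*D)\<^sup>2) powr (- \<gamma> / 2)"
  have D: "D \<ge> 0" unfolding D_def using \<open>N \<ge> 1\<close> by (rule diam0_nonneg)
  have M0: "0 < M0" "M0 \<le> 1"
    unfolding M0_def
    using \<open>\<gamma> > 0\<close> one_plus_power2_powr_pos[of "2*D"] one_plus_power2_powr_le_1[of "- \<gamma> / 2" "2*D"]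
    by auto
  have M0': "(1 + 4 * D\<^sup>2) powr (- \<gamma> / 2) = M0"
    unfolding M0_def by (simp add: power_mult_distrib)
  have "1 < 1/2 * (lv / lx)\<^sup>2 * lw * M0"
    using diam_bound_imp_coupling[OF \<open>\<gamma> > 0\<close> D _ diam[folded D_def]] \<open>lw > 0\<close> \<open>lv > 0\<close> \<open>lx > 0\<close>
    unfolding M0' by (simp add: mult.commute)
  then have coupling: "2*lx\<^sup>2 < lv\<^sup>2*M0*lw"
    using \<open>lx > 0\<close> by (simp add: power_divide field_simps)
  have "energy1 N lx lv lw x v 0 < 3/2 * ((1 - M0/2) * lw * D\<^sup>2)"
    using en unfolding D_def[symmetric] M0' by (simp only: mult.assoc)
  also have "\<dots> \<le> (1 - M0/2) * lw * (2*D)\<^sup>2 / 2"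
    using M0 \<open>lw > 0\<close> by (simp add: power_mult_distrib)
  finally have small: "energy1 N lx lv lw x v 0 < (1 - M0/2) * lw * (2*D)\<^sup>2 / 2" .
  define \<mu> where "\<mu> = min (1/2) (-1 + 1/2 * (lv / lx)\<^sup>2 * lw * M0) * herd_alpha lx lv lw"
  have "\<mu> > 0"
    unfolding \<mu>_def using \<open>1 < 1/2 * (lv / lx)\<^sup>2 * lw * M0\<close>
      herd_alpha_pos[OF \<open>lx > 0\<close> \<open>lv > 0\<close> \<open>lw > 0\<close>] by simp
  then obtain \<delta> where \<delta>: "0 < \<delta>" "\<delta> < 1" "\<delta> * \<mu> \<le> energy_decay_rate lx lv lw M0"
    using exists_factor_below energy_decay_rate_pos[OF \<open>lx > 0\<close> \<open>lv > 0\<close> \<open>lw > 0\<close> coupling] by blast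
  have "0 \<le> 2*D"
    using D by simp
  note spreads = spreads_exponential_decay[OF this coupling M0_def small _ _ _ \<delta>(3)]
  have \<kappa>: "\<delta> * \<mu> = \<delta> * min (1/2) (-1 + 1/2 * (lv / lx)\<^sup>2 * lw * M0) * herd_alpha lx lv lw"
    unfolding \<mu>_def by (simp add: mult.assoc)
  show ?thesis
    unfolding Let_def M0' D_def[symmetric]
    using \<delta>(1,2) spreads[unfolded \<kappa>] by blast
qed

end
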